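(* Let $\mathcal L$ be a coherent differential summable resource category (see context). Then for all objects $X_0,X_1$ the following equalities hold in $\mathcal L$: $$\partial_{X_0\&X_1}\circ\,!(SX_0\&\iota_{0,X_1})\circ m^2_{SX_0,X_1}=S(m^2_{X_0,X_1})\circ\varphi^0_{!X_0,!X_1}\circ(\partial_{X_0}\otimes !X_1)$$ as morphisms $!SX_0\otimes !X_1\to S!(X_0\& X_1)$, and symmetrically $$\partial_{X_0\&X_1}\circ\,!(\iota_{0,X_0}\&SX_1)\circ m^2_{X_0,SX_1}=S(m^2_{X_0,X_1})\circ\varphi^1_{!X_0,!X_1}\circ(!X_0\otimes \partial_{X_1}).$$
   Context: $\mathcal L$ is a symmetric monoidal closed category (tensor $\otimes$, unit $1$) with finite cartesian products ($X_0\& X_1$, projections $p_0,p_1$, terminal object $\top$), with a resource comonad $(!,\mathrm{der},\mathrm{dig})$ and Seely isomorphisms $m^0\in\mathcal L(1,!\top)$, $m^2_{X_0,X_1}\in\mathcal L(!X_0\otimes!X_1,!(X_0\&X_1))$ (a categorical model of linear logic); objects written in place of morphisms denote identities. $\mathcal L$ has zero morphisms and a summability structure $(S,\pi_0,\pi_1,\sigma)$: $S$ an endofunctor, $\pi_0,\pi_1,\sigma:S\Rightarrow\mathrm{Id}$ natural, $\pi_0,\pi_1$ jointly monic; $f_0,f_1\in\mathcal L(X,Y)$ are summable if some (unique) $\langle f_0,f_1\rangle\in\mathcal L(X,SY)$ has $\pi_i\circ\langle f_0,f_1\rangle=f_i$, and then $f_0+f_1=\sigma\circ\langle f_0,f_1\rangle$;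 it satisfies the axioms of Ehrhard's coherent differentiation (homsets are partial commutative monoids with neutral $0$, composition and $\otimes$ distribute over defined sums). $\iota_0=\langle\mathrm{id},0\rangle$; the flip $c:S^2\Rightarrow S^2$ with $\pi_i\pi_jc=\pi_j\pi_i$; $\tau:S^2\Rightarrow S$ with $\pi_0\tau=\pi_0\pi_0$, $\pi_1\tau=\pi_1\pi_0+\pi_0\pi_1$. $S$ preserves products strictly ($S(X_0\&X_1)=SX_0\&SX_1$, $Sp_i=p_i$). The tensorial strength $\varphi^0_{X_0,X_1}\in\mathcal L(SX_0\otimes X_1,S(X_0\otimes X_1))$ is characterised by $\pi_i\circ\varphi^0=\pi_i\otimes X_1$, and $\varphi^1_{X_0,X_1}\in\mathcal L(X_0\otimes SX_1,S(X_0\otimes X_1))$ by $\pi_i\circ\varphi^1=X_0\otimes\pi_i$; $L_{X_0,X_1}\in\mathcal L(SX_0\otimes SX_1,S(X_0\otimes X_1))$ is characterised by $\pi_0L=\pi_0\otimes\pi_0$ and $\pi_1L=\pi_1\otimes\pi_0+\pi_0\otimes\pi_1$. A coherent differential structure is a natural $\partial_X\in\mathcal L(!SX,S!X)$ with: $\pi_0\partial_X=!\pi_0$; $\partial_X\circ!\iota_0=\iota_0$ and $\tau\circ S\partial_X\circ\partial_{SX}=\partial_X\circ!\tau$; $S\mathrm{der}_X\circ\partial_X=\mathrm{der}_{SX}$ and $S\mathrm{dig}_X\circ\partial_X=\partial_{!X}\circ!\partial_X\circ\mathrm{dig}_{SX}$; $S(m^0)^{-1}\circ\partial_\top=\iota_0\circ(m^0)^{-1}\circ!0$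 and $S(m^2_{X_0,X_1})^{-1}\circ\partial_{X_0\&X_1}=L_{!X_0,!X_1}\circ(\partial_{X_0}\otimes\partial_{X_1})\circ(m^2_{SX_0,SX_1})^{-1}$; $c\circ S\partial_X\circ\partial_{SX}=S\partial_X\circ\partial_{SX}\circ!c$. *)

theory Defs
  imports Main
begin

text \<open>
  A coherent differential summable resource category, encoded as a record of
  data (objects of type 'o, morphisms of type 'm, with domain/codomain maps and a
  total composition operation that is only meaningful on composable arrows)
  together with a locale-predicate collecting the axioms.
  Convention: cComp C g f is  g o f.
\<close>

record ('o, 'm) cdcat =
  cArr   :: "'m \<Rightarrow> bool"
  cDom   :: "'m \<Rightarrow> 'o"
  cCod   :: "'m \<Rightarrow> 'o"
  cComp  :: "'m \<Rightarrow> 'm \<Rightarrow> 'm"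
  cId    :: "'o \<Rightarrow> 'm"
  cTen   :: "'o \<Rightarrow> 'o \<Rightarrow> 'o"
  cTenM  :: "'m \<Rightarrow> 'm \<Rightarrow> 'm"
  cUnit  :: "'o"
  cAssoc :: "'o \<Rightarrow> 'o \<Rightarrow> 'o \<Rightarrow> 'm"
  cLunit :: "'o \<Rightarrow> 'm"
  cRunit :: "'o \<Rightarrow> 'm"
  cSym   :: "'o \<Rightarrow> 'o \<Rightarrow> 'm"
  cIHom  :: "'o \<Rightarrow> 'o \<Rightarrow> 'o"
  cEv    :: "'o \<Rightarrow> 'o \<Rightarrow> 'm"
  cWith  :: "'o \<Rightarrow> 'o \<Rightarrow> 'o"
  cPr0   :: "'o \<Rightarrow> 'o \<Rightarrow> 'm"
  cPr1   :: "'o \<Rightarrow> 'o \<Rightarrow> 'm"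
  cTop   :: "'o"
  cBang  :: "'o \<Rightarrow> 'o"
  cBangM :: "'m \<Rightarrow> 'm"
  cDer   :: "'o \<Rightarrow> 'm"
  cDig   :: "'o \<Rightarrow> 'm"
  cM0    :: "'m"
  cM2    :: "'o \<Rightarrow> 'o \<Rightarrow> 'm"
  cZero  :: "'o \<Rightarrow> 'o \<Rightarrow> 'm"
  cS     :: "'o \<Rightarrow> 'o"
  cSM    :: "'m \<Rightarrow> 'm"
  cPi0   :: "'o \<Rightarrow> 'm"
  cPi1   :: "'o \<Rightarrow> 'm"
  cSigma :: "'o \<Rightarrow> 'm"
  \<comment> \<open>derived morphisms of the summability structure (given with their characterisations)\<close>
  cIota0 :: "'o \<Rightarrow> 'm"
  cFlip  :: "'o \<Rightarrow> 'm"
  cTau   :: "'o \<Rightarrow> 'm"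
  cPhi0  :: "'o \<Rightarrow> 'o \<Rightarrow> 'm"
  cPhi1  :: "'o \<Rightarrow> 'o \<Rightarrow> 'm"
  cL     :: "'o \<Rightarrow> 'o \<Rightarrow> 'm"
  cDiff  :: "'o \<Rightarrow> 'm"

definition hom :: "('o, 'm, 'z) cdcat_scheme \<Rightarrow> 'o \<Rightarrow> 'o \<Rightarrow> 'm set" where
  "hom C X Y = {f. cArr C f \<and> cDom C f = X \<and> cCod C f = Y}"

definition iso :: "('o, 'm, 'z) cdcat_scheme \<Rightarrow> 'm \<Rightarrow> bool" where
  "iso C f \<longleftrightarrow> cArr C f \<and> (\<exists>g \<in> hom C (cCod C f) (cDom C f).
      cComp C g f = cId C (cDom C f) \<and> cComp C f g = cId C (cCod C f))"

definition inv :: "('o, 'm, 'z) cdcat_scheme \<Rightarrow> 'm \<Rightarrow> 'm" where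
  "inv C f = (THE g. g \<in> hom C (cCod C f) (cDom C f) \<and>
      cComp C g f = cId C (cDom C f) \<and> cComp C f g = cId C (cCod C f))"

definition summable :: "('o, 'm, 'z) cdcat_scheme \<Rightarrow> 'm \<Rightarrow> 'm \<Rightarrow> bool" where
  "summable C f0 f1 \<longleftrightarrow> cArr C f0 \<and> cArr C f1 \<and> cDom C f0 = cDom C f1 \<and> cCod C f0 = cCod C f1 \<and>
     (\<exists>h \<in> hom C (cDom C f0) (cS C (cCod C f0)).
        cComp C (cPi0 C (cCod C f0)) h = f0 \<and> cComp C (cPi1 C (cCod C f0)) h = f1)"

definition witness :: "('o, 'm, 'z) cdcat_scheme \<Rightarrow> 'm \<Rightarrow> 'm \<Rightarrow> 'm" where
  "witness C f0 f1 = (THE h. h \<in> hom C (cDom C f0) (cS C (cCod C f0)) \<and>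
        cComp C (cPi0 C (cCod C f0)) h = f0 \<and> cComp C (cPi1 C (cCod C f0)) h = f1)"

definition ssum :: "('o, 'm, 'z) cdcat_scheme \<Rightarrow> 'm \<Rightarrow> 'm \<Rightarrow> 'm" where
  "ssum C f0 f1 = cComp C (cSigma C (cCod C f0)) (witness C f0 f1)"

definition pair :: "('o, 'm, 'z) cdcat_scheme \<Rightarrow> 'm \<Rightarrow> 'm \<Rightarrow> 'm" where
  "pair C f g = (THE h. h \<in> hom C (cDom C f) (cWith C (cCod C f) (cCod C g)) \<and>
      cComp C (cPr0 C (cCod C f) (cCod C g)) h = f \<and> cComp C (cPr1 C (cCod C f) (cCod C g)) h = g)"

definition withM :: "('o, 'm, 'z) cdcat_scheme \<Rightarrow> 'm \<Rightarrow> 'm \<Rightarrow> 'm" where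
  "withM C f g = pair C (cComp C f (cPr0 C (cDom C f) (cDom C g)))
                        (cComp C g (cPr1 C (cDom C f) (cDom C g)))"

locale cd_resource_cat =
  fixes C :: "('o, 'm) cdcat"
  assumes
    id_hom: "cId C X \<in> hom C X X"
and comp_hom: "\<lbrakk>f \<in> hom C X Y; g \<in> hom C Y Z\<rbrakk> \<Longrightarrow> cComp C g f \<in> hom C X Z"
and comp_assoc: "\<lbrakk>f \<in> hom C X Y; g \<in> hom C Y Z; h \<in> hom C Z W\<rbrakk> \<Longrightarrow>
       cComp C h (cComp C g f) = cComp C (cComp C h g) f"
and id_left: "f \<in> hom C X Y \<Longrightarrow> cComp C (cId C Y) f = f"
and id_right: "f \<in> hom C X Y \<Longrightarrow> cComp C f (cId C X) = f"
and ten_hom: "\<lbrakk>f \<in> hom C X Y; g \<in> hom C X' Y'\<rbrakk> \<Longrightarrow> cTenM C f g \<in> hom C (cTen C X X') (cTen C Y Y')"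
and ten_id: "cTenM C (cId C X) (cId C Y) = cId C (cTen C X Y)"
and ten_comp: "\<lbrakk>f \<in> hom C X Y; g \<in> hom C Y Z; f' \<in> hom C X' Y'; g' \<in> hom C Y' Z'\<rbrakk> \<Longrightarrow>
       cTenM C (cComp C g f) (cComp C g' f') = cComp C (cTenM C g g') (cTenM C f f')"
and assoc_hom: "cAssoc C X Y Z \<in> hom C (cTen C (cTen C X Y) Z) (cTen C X (cTen C Y Z))"
and assoc_iso: "iso C (cAssoc C X Y Z)"
and assoc_nat: "\<lbrakk>f \<in> hom C X X'; g \<in> hom C Y Y'; h \<in> hom C Z Z'\<rbrakk> \<Longrightarrow>
       cComp C (cAssoc C X' Y' Z') (cTenM C (cTenM C f g) h)
     = cComp C (cTenM C f (cTenM C g h)) (cAssoc C X Y Z)"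
and lunit_hom: "cLunit C X \<in> hom C (cTen C (cUnit C) X) X"
and lunit_iso: "iso C (cLunit C X)"
and lunit_nat: "f \<in> hom C X Y \<Longrightarrow>
       cComp C f (cLunit C X) = cComp C (cLunit C Y) (cTenM C (cId C (cUnit C)) f)"
and runit_hom: "cRunit C X \<in> hom C (cTen C X (cUnit C)) X"
and runit_iso: "iso C (cRunit C X)"
and runit_nat: "f \<in> hom C X Y \<Longrightarrow>
       cComp C f (cRunit C X) = cComp C (cRunit C Y) (cTenM C f (cId C (cUnit C)))"
and sym_hom: "cSym C X Y \<in> hom C (cTen C X Y) (cTen C Y X)"
and sym_nat: "\<lbrakk>f \<in> hom C X X'; g \<in> hom C Y Y'\<rbrakk> \<Longrightarrow>
       cComp C (cSym C X' Y') (cTenM C f g) = cComp C (cTenM C g f) (cSym C X Y)"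
and sym_inv: "cComp C (cSym C Y X) (cSym C X Y) = cId C (cTen C X Y)"
and pentagon: "cComp C (cAssoc C W X (cTen C Y Z)) (cAssoc C (cTen C W X) Y Z)
     = cComp C (cTenM C (cId C W) (cAssoc C X Y Z))
         (cComp C (cAssoc C W (cTen C X Y) Z) (cTenM C (cAssoc C W X Y) (cId C Z)))"
and triangle: "cComp C (cTenM C (cId C X) (cLunit C Y)) (cAssoc C X (cUnit C) Y)
     = cTenM C (cRunit C X) (cId C Y)"
and hexagon: "cComp C (cAssoc C Y Z X) (cComp C (cSym C X (cTen C Y Z)) (cAssoc C X Y Z))
     = cComp C (cTenM C (cId C Y) (cSym C X Z))
         (cComp C (cAssoc C Y X Z) (cTenM C (cSym C X Y) (cId C Z)))"
and ev_hom: "cEv C X Y \<in> hom C (cTen C (cIHom C X Y) X) Y"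
and closed: "f \<in> hom C (cTen C Z X) Y \<Longrightarrow>
       \<exists>!g. g \<in> hom C Z (cIHom C X Y) \<and> cComp C (cEv C X Y) (cTenM C g (cId C X)) = f"
and pr0_hom: "cPr0 C X Y \<in> hom C (cWith C X Y) X"
and pr1_hom: "cPr1 C X Y \<in> hom C (cWith C X Y) Y"
and product: "\<lbrakk>f \<in> hom C Z X; g \<in> hom C Z Y\<rbrakk> \<Longrightarrow>
       \<exists>!h. h \<in> hom C Z (cWith C X Y) \<and> cComp C (cPr0 C X Y) h = f \<and> cComp C (cPr1 C X Y) h = g"
and terminal: "\<exists>!h. h \<in> hom C Z (cTop C)"
and bang_hom: "f \<in> hom C X Y \<Longrightarrow> cBangM C f \<in> hom C (cBang C X) (cBang C Y)"
and bang_id: "cBangM C (cId C X) = cId C (cBang C X)"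
and bang_comp: "\<lbrakk>f \<in> hom C X Y; g \<in> hom C Y Z\<rbrakk> \<Longrightarrow>
       cBangM C (cComp C g f) = cComp C (cBangM C g) (cBangM C f)"
and der_hom: "cDer C X \<in> hom C (cBang C X) X"
and der_nat: "f \<in> hom C X Y \<Longrightarrow> cComp C f (cDer C X) = cComp C (cDer C Y) (cBangM C f)"
and dig_hom: "cDig C X \<in> hom C (cBang C X) (cBang C (cBang C X))"
and dig_nat: "f \<in> hom C X Y \<Longrightarrow>
       cComp C (cBangM C (cBangM C f)) (cDig C X) = cComp C (cDig C Y) (cBangM C f)"
and comonad_1: "cComp C (cDer C (cBang C X)) (cDig C X) = cId C (cBang C X)"
and comonad_2: "cComp C (cBangM C (cDer C X)) (cDig C X) = cId C (cBang C X)"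
and comonad_3: "cComp C (cDig C (cBang C X)) (cDig C X) = cComp C (cBangM C (cDig C X)) (cDig C X)"
    \<comment> \<open>Seely isomorphisms (symmetric monoidal structure of ! from (&,T) to (tensor,1),
        compatible with dig)\<close>
and m0_hom: "cM0 C \<in> hom C (cUnit C) (cBang C (cTop C))"
and m0_iso: "iso C (cM0 C)"
and m2_hom: "cM2 C X Y \<in> hom C (cTen C (cBang C X) (cBang C Y)) (cBang C (cWith C X Y))"
and m2_iso: "iso C (cM2 C X Y)"
and m2_nat: "\<lbrakk>f \<in> hom C X X'; g \<in> hom C Y Y'\<rbrakk> \<Longrightarrow>
       cComp C (cM2 C X' Y') (cTenM C (cBangM C f) (cBangM C g))
     = cComp C (cBangM C (withM C f g)) (cM2 C X Y)"
and seely_assoc: "cComp C (cBangM C (pair C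
            (cComp C (cPr0 C X Y) (cPr0 C (cWith C X Y) Z))
            (pair C (cComp C (cPr1 C X Y) (cPr0 C (cWith C X Y) Z)) (cPr1 C (cWith C X Y) Z))))
         (cComp C (cM2 C (cWith C X Y) Z) (cTenM C (cM2 C X Y) (cId C (cBang C Z))))
     = cComp C (cM2 C X (cWith C Y Z))
         (cComp C (cTenM C (cId C (cBang C X)) (cM2 C Y Z)) (cAssoc C (cBang C X) (cBang C Y) (cBang C Z)))"
and seely_lunit: "cComp C (cBangM C (cPr1 C (cTop C) X))
         (cComp C (cM2 C (cTop C) X) (cTenM C (cM0 C) (cId C (cBang C X)))) = cLunit C (cBang C X)"
and seely_runit: "cComp C (cBangM C (cPr0 C X (cTop C)))
         (cComp C (cM2 C X (cTop C)) (cTenM C (cId C (cBang C X)) (cM0 C))) = cRunit C (cBang C X)"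
and seely_sym: "cComp C (cBangM C (pair C (cPr1 C X Y) (cPr0 C X Y))) (cM2 C X Y)
     = cComp C (cM2 C Y X) (cSym C (cBang C X) (cBang C Y))"
and seely_dig: "cComp C (cBangM C (pair C (cBangM C (cPr0 C X Y)) (cBangM C (cPr1 C X Y))))
         (cComp C (cDig C (cWith C X Y)) (cM2 C X Y))
     = cComp C (cM2 C (cBang C X) (cBang C Y)) (cTenM C (cDig C X) (cDig C Y))"
and zero_hom: "cZero C X Y \<in> hom C X Y"
and zero_comp_left: "f \<in> hom C Y Z \<Longrightarrow> cComp C f (cZero C X Y) = cZero C X Z"
and zero_comp_right: "g \<in> hom C W X \<Longrightarrow> cComp C (cZero C X Y) g = cZero C W Y"
and S_hom: "f \<in> hom C X Y \<Longrightarrow> cSM C f \<in> hom C (cS C X) (cS C Y)"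
and S_id: "cSM C (cId C X) = cId C (cS C X)"
and S_comp: "\<lbrakk>f \<in> hom C X Y; g \<in> hom C Y Z\<rbrakk> \<Longrightarrow> cSM C (cComp C g f) = cComp C (cSM C g) (cSM C f)"
and pi0_hom: "cPi0 C X \<in> hom C (cS C X) X"
and pi1_hom: "cPi1 C X \<in> hom C (cS C X) X"
and sigma_hom: "cSigma C X \<in> hom C (cS C X) X"
and pi0_nat: "f \<in> hom C X Y \<Longrightarrow> cComp C f (cPi0 C X) = cComp C (cPi0 C Y) (cSM C f)"
and pi1_nat: "f \<in> hom C X Y \<Longrightarrow> cComp C f (cPi1 C X) = cComp C (cPi1 C Y) (cSM C f)"
and sigma_nat: "f \<in> hom C X Y \<Longrightarrow> cComp C f (cSigma C X) = cComp C (cSigma C Y) (cSM C f)"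
and pi_jointly_monic: "\<lbrakk>h \<in> hom C Z (cS C X); h' \<in> hom C Z (cS C X);
       cComp C (cPi0 C X) h = cComp C (cPi0 C X) h'; cComp C (cPi1 C X) h = cComp C (cPi1 C X) h'\<rbrakk>
       \<Longrightarrow> h = h'"
and sum_zero: "f \<in> hom C X Y \<Longrightarrow> summable C f (cZero C X Y) \<and> ssum C f (cZero C X Y) = f"
and sum_comm: "summable C f g \<Longrightarrow> summable C g f \<and> ssum C g f = ssum C f g"
and sum_assoc: "\<lbrakk>summable C f g; summable C (ssum C f g) h\<rbrakk> \<Longrightarrow>
       summable C g h \<and> summable C f (ssum C g h) \<and> ssum C (ssum C f g) h = ssum C f (ssum C g h)"
and sum_comp_right: "\<lbrakk>summable C g0 g1; g0 \<in> hom C Y Z; f \<in> hom C X Y\<rbrakk> \<Longrightarrow>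
       summable C (cComp C g0 f) (cComp C g1 f) \<and>
       cComp C (ssum C g0 g1) f = ssum C (cComp C g0 f) (cComp C g1 f)"
and sum_comp_left: "\<lbrakk>summable C g0 g1; g0 \<in> hom C X Y; h \<in> hom C Y Z\<rbrakk> \<Longrightarrow>
       summable C (cComp C h g0) (cComp C h g1) \<and>
       cComp C h (ssum C g0 g1) = ssum C (cComp C h g0) (cComp C h g1)"
and sum_ten_left: "\<lbrakk>summable C f0 f1; cArr C g\<rbrakk> \<Longrightarrow>
       summable C (cTenM C f0 g) (cTenM C f1 g) \<and>
       cTenM C (ssum C f0 f1) g = ssum C (cTenM C f0 g) (cTenM C f1 g)"
and sum_ten_right: "\<lbrakk>summable C f0 f1; cArr C g\<rbrakk> \<Longrightarrow>
       summable C (cTenM C g f0) (cTenM C g f1) \<and>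
       cTenM C g (ssum C f0 f1) = ssum C (cTenM C g f0) (cTenM C g f1)"
and zero_ten_left: "g \<in> hom C X' Y' \<Longrightarrow> cTenM C (cZero C X Y) g = cZero C (cTen C X X') (cTen C Y Y')"
and zero_ten_right: "g \<in> hom C X' Y' \<Longrightarrow> cTenM C g (cZero C X Y) = cZero C (cTen C X' X) (cTen C Y' Y)"
    \<comment> \<open>S preserves products strictly\<close>
and S_with: "cS C (cWith C X0 X1) = cWith C (cS C X0) (cS C X1)"
and S_pr0: "cSM C (cPr0 C X0 X1) = cPr0 C (cS C X0) (cS C X1)"
and S_pr1: "cSM C (cPr1 C X0 X1) = cPr1 C (cS C X0) (cS C X1)"
and iota0_hom: "cIota0 C X \<in> hom C X (cS C X)"
and iota0_pi0: "cComp C (cPi0 C X) (cIota0 C X) = cId C X"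
and iota0_pi1: "cComp C (cPi1 C X) (cIota0 C X) = cZero C X X"
and flip_hom: "cFlip C X \<in> hom C (cS C (cS C X)) (cS C (cS C X))"
and flip_00: "cComp C (cComp C (cPi0 C X) (cPi0 C (cS C X))) (cFlip C X) = cComp C (cPi0 C X) (cPi0 C (cS C X))"
and flip_01: "cComp C (cComp C (cPi0 C X) (cPi1 C (cS C X))) (cFlip C X) = cComp C (cPi1 C X) (cPi0 C (cS C X))"
and flip_10: "cComp C (cComp C (cPi1 C X) (cPi0 C (cS C X))) (cFlip C X) = cComp C (cPi0 C X) (cPi1 C (cS C X))"
and flip_11: "cComp C (cComp C (cPi1 C X) (cPi1 C (cS C X))) (cFlip C X) = cComp C (cPi1 C X) (cPi1 C (cS C X))"
and tau_hom: "cTau C X \<in> hom C (cS C (cS C X)) (cS C X)"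
and tau_pi0: "cComp C (cPi0 C X) (cTau C X) = cComp C (cPi0 C X) (cPi0 C (cS C X))"
and tau_summable: "summable C (cComp C (cPi1 C X) (cPi0 C (cS C X))) (cComp C (cPi0 C X) (cPi1 C (cS C X)))"
and tau_pi1: "cComp C (cPi1 C X) (cTau C X)
     = ssum C (cComp C (cPi1 C X) (cPi0 C (cS C X))) (cComp C (cPi0 C X) (cPi1 C (cS C X)))"
and phi0_hom: "cPhi0 C X0 X1 \<in> hom C (cTen C (cS C X0) X1) (cS C (cTen C X0 X1))"
and phi0_pi0: "cComp C (cPi0 C (cTen C X0 X1)) (cPhi0 C X0 X1) = cTenM C (cPi0 C X0) (cId C X1)"
and phi0_pi1: "cComp C (cPi1 C (cTen C X0 X1)) (cPhi0 C X0 X1) = cTenM C (cPi1 C X0) (cId C X1)"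
and phi1_hom: "cPhi1 C X0 X1 \<in> hom C (cTen C X0 (cS C X1)) (cS C (cTen C X0 X1))"
and phi1_pi0: "cComp C (cPi0 C (cTen C X0 X1)) (cPhi1 C X0 X1) = cTenM C (cId C X0) (cPi0 C X1)"
and phi1_pi1: "cComp C (cPi1 C (cTen C X0 X1)) (cPhi1 C X0 X1) = cTenM C (cId C X0) (cPi1 C X1)"
and L_hom: "cL C X0 X1 \<in> hom C (cTen C (cS C X0) (cS C X1)) (cS C (cTen C X0 X1))"
and L_pi0: "cComp C (cPi0 C (cTen C X0 X1)) (cL C X0 X1) = cTenM C (cPi0 C X0) (cPi0 C X1)"
and L_summable: "summable C (cTenM C (cPi1 C X0) (cPi0 C X1)) (cTenM C (cPi0 C X0) (cPi1 C X1))"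
and L_pi1: "cComp C (cPi1 C (cTen C X0 X1)) (cL C X0 X1)
     = ssum C (cTenM C (cPi1 C X0) (cPi0 C X1)) (cTenM C (cPi0 C X0) (cPi1 C X1))"
and diff_hom: "cDiff C X \<in> hom C (cBang C (cS C X)) (cS C (cBang C X))"
and diff_nat: "f \<in> hom C X Y \<Longrightarrow>
       cComp C (cSM C (cBangM C f)) (cDiff C X) = cComp C (cDiff C Y) (cBangM C (cSM C f))"
and diff_pi0: "cComp C (cPi0 C (cBang C X)) (cDiff C X) = cBangM C (cPi0 C X)"
and diff_iota0: "cComp C (cDiff C X) (cBangM C (cIota0 C X)) = cIota0 C (cBang C X)"
and diff_tau: "cComp C (cTau C (cBang C X)) (cComp C (cSM C (cDiff C X)) (cDiff C (cS C X)))
     = cComp C (cDiff C X) (cBangM C (cTau C X))"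
and diff_der: "cComp C (cSM C (cDer C X)) (cDiff C X) = cDer C (cS C X)"
and diff_dig: "cComp C (cSM C (cDig C X)) (cDiff C X)
     = cComp C (cDiff C (cBang C X)) (cComp C (cBangM C (cDiff C X)) (cDig C (cS C X)))"
and diff_m0: "cComp C (cSM C (inv C (cM0 C))) (cDiff C (cTop C))
     = cComp C (cIota0 C (cUnit C)) (cComp C (inv C (cM0 C)) (cBangM C (cZero C (cS C (cTop C)) (cTop C))))"
and diff_m2: "cComp C (cSM C (inv C (cM2 C X0 X1))) (cDiff C (cWith C X0 X1))
     = cComp C (cL C (cBang C X0) (cBang C X1))
         (cComp C (cTenM C (cDiff C X0) (cDiff C X1)) (inv C (cM2 C (cS C X0) (cS C X1))))"
and diff_flip: "cComp C (cFlip C (cBang C X)) (cComp C (cSM C (cDiff C X)) (cDiff C (cS C X)))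
     = cComp C (cComp C (cSM C (cDiff C X)) (cDiff C (cS C X))) (cBangM C (cFlip C X))"

end

theory Submission
  imports Defs
begin

(* The Seely axiom of the differential says that, transported along m2, the derivative of a
   product map is L o (d_X0 (x) d_X1). Precomposing with !(S X0 & iota0) replaces the second
   factor by d_X1 o !iota0 = iota0, and L o (S X0 (x) iota0) is the strength phi0: of the two
   summands of pi1 o L = pi1 (x) pi0 + pi0 (x) pi1, the second is killed by pi1 o iota0 = 0.
   The second equation is the mirror image, with phi1. *)

context cd_resource_cat
begin

abbreviation arr_comp (infixr "\<cdot>" 55) where "g \<cdot> f \<equiv> cComp C g f"
abbreviation arr_tensor (infixr "\<otimes>" 70) where "f \<otimes> g \<equiv> cTenM C f g"

lemma diff_with_hom:
  "cDiff C (cWith C X0 X1) \<in> hom C (cBang C (cWith C (cS C X0) (cS C X1))) (cS C (cBang C (cWith C X0 X1)))"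
  using diff_hom[of "cWith C X0 X1"] by (simp add: S_with)

lemmas hom_intros = id_hom comp_hom ten_hom S_hom pi0_hom pi1_hom iota0_hom
  L_hom diff_with_hom diff_hom m2_hom

lemma iso_inv:
  assumes "iso C f" and f: "f \<in> hom C X Y"
  shows "inv C f \<in> hom C Y X" and "inv C f \<cdot> f = cId C X" and "f \<cdot> inv C f = cId C Y"
proof -
  have dom_cod: "cDom C f = X" "cCod C f = Y" using f by (auto simp: hom_def)
  obtain g where g: "g \<in> hom C Y X" "g \<cdot> f = cId C X" "f \<cdot> g = cId C Y"
    using assms(1) dom_cod unfolding iso_def by auto
  have unique: "g' = g" if g': "g' \<in> hom C Y X" "g' \<cdot> f = cId C X" for g'
  proof -
    have "g' = g' \<cdot> f \<cdot> g" using id_right[OF g'(1)] g(3) by simp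
    also have "\<dots> = g" using comp_assoc[OF g(1) f g'(1)] g'(2) id_left[OF g(1)] by simp
    finally show ?thesis .
  qed
  have "inv C f = g"
    unfolding inv_def dom_cod by (rule the_equality) (use g unique in blast)+
  with g show "inv C f \<in> hom C Y X" "inv C f \<cdot> f = cId C X" "f \<cdot> inv C f = cId C Y" by simp_all
qed

lemma eq_comp_transpose:
  assumes d: "d \<in> hom C A B" and r: "r \<in> hom C A0 B0"
    and f: "f \<in> hom C B0 B" "f' \<in> hom C B B0" "f \<cdot> f' = cId C B"
    and g: "g \<in> hom C A0 A" "g' \<in> hom C A A0" "g' \<cdot> g = cId C A0"
    and transposed: "f' \<cdot> d = r \<cdot> g'"
  shows "d \<cdot> g = f \<cdot> r"
proof -
  have "d \<cdot> g = (f \<cdot> f' \<cdot> d) \<cdot> g"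
    by (simp add: comp_assoc[OF d f(2,1)] f(3) id_left[OF d])
  also have "\<dots> = f \<cdot> r \<cdot> g' \<cdot> g"
    by (simp add: transposed comp_assoc[OF g(1) comp_hom[OF g(2) r] f(1)] comp_assoc[OF g(1) g(2) r])
  also have "\<dots> = f \<cdot> r" by (simp add: g(3) id_right[OF r])
  finally show ?thesis .
qed

lemma ssum_zero_left: "f \<in> hom C X Y \<Longrightarrow> ssum C (cZero C X Y) f = f"
  using sum_zero sum_comm by metis

lemma pi0_L_comp_ten:
  assumes "f \<in> hom C Z (cS C A)" and "g \<in> hom C Z' (cS C B)"
  shows "cPi0 C (cTen C A B) \<cdot> cL C A B \<cdot> f \<otimes> g = (cPi0 C A \<cdot> f) \<otimes> (cPi0 C B \<cdot> g)"
proof -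
  have "cPi0 C (cTen C A B) \<cdot> cL C A B \<cdot> f \<otimes> g = (cPi0 C (cTen C A B) \<cdot> cL C A B) \<cdot> f \<otimes> g"
    by (rule comp_assoc; (rule hom_intros assms)+)
  also have "\<dots> = (cPi0 C A \<cdot> f) \<otimes> (cPi0 C B \<cdot> g)"
    by (simp add: L_pi0 ten_comp[OF assms(1) pi0_hom assms(2) pi0_hom])
  finally show ?thesis .
qed

lemma pi1_L_comp_ten:
  assumes "f \<in> hom C Z (cS C A)" and "g \<in> hom C Z' (cS C B)"
  shows "cPi1 C (cTen C A B) \<cdot> cL C A B \<cdot> f \<otimes> g
    = ssum C ((cPi1 C A \<cdot> f) \<otimes> (cPi0 C B \<cdot> g)) ((cPi0 C A \<cdot> f) \<otimes> (cPi1 C B \<cdot> g))"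
proof -
  have "cPi1 C (cTen C A B) \<cdot> cL C A B \<cdot> f \<otimes> g = (cPi1 C (cTen C A B) \<cdot> cL C A B) \<cdot> f \<otimes> g"
    by (rule comp_assoc; (rule hom_intros assms)+)
  also have "\<dots> = ssum C (cPi1 C A \<otimes> cPi0 C B \<cdot> f \<otimes> g) (cPi0 C A \<otimes> cPi1 C B \<cdot> f \<otimes> g)"
    using sum_comp_right[OF L_summable ten_hom[OF pi1_hom pi0_hom] ten_hom[OF assms]]
    by (simp add: L_pi1)
  also have "\<dots> = ssum C ((cPi1 C A \<cdot> f) \<otimes> (cPi0 C B \<cdot> g)) ((cPi0 C A \<cdot> f) \<otimes> (cPi1 C B \<cdot> g))"
    by (simp add: ten_comp[OF assms(1) pi1_hom assms(2) pi0_hom]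
        ten_comp[OF assms(1) pi0_hom assms(2) pi1_hom])
  finally show ?thesis .
qed

lemma L_comp_ten_id_iota0: "cL C A B \<cdot> cId C (cS C A) \<otimes> cIota0 C B = cPhi0 C A B"
proof (rule pi_jointly_monic[OF _ phi0_hom])
  show "cL C A B \<cdot> cId C (cS C A) \<otimes> cIota0 C B \<in> hom C (cTen C (cS C A) B) (cS C (cTen C A B))"
    by (rule hom_intros)+
  show "cPi0 C (cTen C A B) \<cdot> cL C A B \<cdot> cId C (cS C A) \<otimes> cIota0 C B
      = cPi0 C (cTen C A B) \<cdot> cPhi0 C A B"
    by (simp add: pi0_L_comp_ten[OF id_hom iota0_hom] id_right[OF pi0_hom] iota0_pi0 phi0_pi0)
  show "cPi1 C (cTen C A B) \<cdot> cL C A B \<cdot> cId C (cS C A) \<otimes> cIota0 C B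
      = cPi1 C (cTen C A B) \<cdot> cPhi0 C A B"
    by (simp add: pi1_L_comp_ten[OF id_hom iota0_hom] id_right[OF pi0_hom] id_right[OF pi1_hom]
        iota0_pi0 iota0_pi1 zero_ten_right[OF pi0_hom] sum_zero[OF ten_hom[OF pi1_hom id_hom]] phi0_pi1)
qed

lemma L_comp_ten_iota0_id: "cL C A B \<cdot> cIota0 C A \<otimes> cId C (cS C B) = cPhi1 C A B"
proof (rule pi_jointly_monic[OF _ phi1_hom])
  show "cL C A B \<cdot> cIota0 C A \<otimes> cId C (cS C B) \<in> hom C (cTen C A (cS C B)) (cS C (cTen C A B))"
    by (rule hom_intros)+
  show "cPi0 C (cTen C A B) \<cdot> cL C A B \<cdot> cIota0 C A \<otimes> cId C (cS C B)
      = cPi0 C (cTen C A B) \<cdot> cPhi1 C A B"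
    by (simp add: pi0_L_comp_ten[OF iota0_hom id_hom] id_right[OF pi0_hom] iota0_pi0 phi1_pi0)
  show "cPi1 C (cTen C A B) \<cdot> cL C A B \<cdot> cIota0 C A \<otimes> cId C (cS C B)
      = cPi1 C (cTen C A B) \<cdot> cPhi1 C A B"
    by (simp add: pi1_L_comp_ten[OF iota0_hom id_hom] id_right[OF pi0_hom] id_right[OF pi1_hom]
        iota0_pi0 iota0_pi1 zero_ten_left[OF pi0_hom] ssum_zero_left[OF ten_hom[OF id_hom pi1_hom]]
        phi1_pi1)
qed

lemma diff_comp_m2:
  "cDiff C (cWith C X0 X1) \<cdot> cM2 C (cS C X0) (cS C X1)
    = cSM C (cM2 C X0 X1) \<cdot> cL C (cBang C X0) (cBang C X1) \<cdot> cDiff C X0 \<otimes> cDiff C X1"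
proof (rule eq_comp_transpose)
  note m2 = iso_inv[OF m2_iso m2_hom]
  show "cSM C (cM2 C X0 X1) \<cdot> cSM C (inv C (cM2 C X0 X1)) = cId C (cS C (cBang C (cWith C X0 X1)))"
    by (simp add: S_comp[OF m2(1) m2_hom, symmetric] m2 S_id)
  show "cSM C (inv C (cM2 C X0 X1)) \<cdot> cDiff C (cWith C X0 X1)
    = (cL C (cBang C X0) (cBang C X1) \<cdot> cDiff C X0 \<otimes> cDiff C X1) \<cdot> inv C (cM2 C (cS C X0) (cS C X1))"
    by (simp add: diff_m2 comp_assoc[OF m2(1) ten_hom[OF diff_hom diff_hom] L_hom])
qed (rule hom_intros iso_inv[OF m2_iso m2_hom])+

lemma diff_comp_bang_withM_m2:
  assumes f: "f \<in> hom C Y0 (cS C X0)" and g: "g \<in> hom C Y1 (cS C X1)"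
  shows "cDiff C (cWith C X0 X1) \<cdot> cBangM C (withM C f g) \<cdot> cM2 C Y0 Y1
    = cSM C (cM2 C X0 X1) \<cdot> cL C (cBang C X0) (cBang C X1) \<cdot>
        (cDiff C X0 \<cdot> cBangM C f) \<otimes> (cDiff C X1 \<cdot> cBangM C g)"
proof -
  note fg = ten_hom[OF bang_hom[OF f] bang_hom[OF g]]
  note dd = ten_hom[OF diff_hom diff_hom]
  have "cDiff C (cWith C X0 X1) \<cdot> cBangM C (withM C f g) \<cdot> cM2 C Y0 Y1
      = (cDiff C (cWith C X0 X1) \<cdot> cM2 C (cS C X0) (cS C X1)) \<cdot> cBangM C f \<otimes> cBangM C g"
    by (simp add: m2_nat[OF f g, symmetric] comp_assoc[OF fg m2_hom diff_with_hom])
  also have "\<dots> = cSM C (cM2 C X0 X1) \<cdot> cL C (cBang C X0) (cBang C X1) \<cdot>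
      (cDiff C X0 \<otimes> cDiff C X1 \<cdot> cBangM C f \<otimes> cBangM C g)"
    by (simp add: diff_comp_m2 comp_assoc[OF fg comp_hom[OF dd L_hom] S_hom[OF m2_hom]]
        comp_assoc[OF fg dd L_hom])
  also have "\<dots> = cSM C (cM2 C X0 X1) \<cdot> cL C (cBang C X0) (cBang C X1) \<cdot>
        (cDiff C X0 \<cdot> cBangM C f) \<otimes> (cDiff C X1 \<cdot> cBangM C g)"
    by (simp add: ten_comp[OF bang_hom[OF f] diff_hom bang_hom[OF g] diff_hom])
  finally show ?thesis .
qed

lemma diff_comp_bang_withM_id_iota0:
  "cDiff C (cWith C X0 X1) \<cdot> cBangM C (withM C (cId C (cS C X0)) (cIota0 C X1)) \<cdot> cM2 C (cS C X0) X1
    = cSM C (cM2 C X0 X1) \<cdot> cPhi0 C (cBang C X0) (cBang C X1) \<cdot> cDiff C X0 \<otimes> cId C (cBang C X1)"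
proof -
  have "cDiff C X0 \<otimes> cIota0 C (cBang C X1)
      = cId C (cS C (cBang C X0)) \<otimes> cIota0 C (cBang C X1) \<cdot> cDiff C X0 \<otimes> cId C (cBang C X1)"
    by (simp add: ten_comp[OF diff_hom id_hom id_hom iota0_hom, symmetric] id_left[OF diff_hom]
        id_right[OF iota0_hom])
  then show ?thesis
    by (simp add: diff_comp_bang_withM_m2[OF id_hom iota0_hom] bang_id id_right[OF diff_hom]
        diff_iota0 comp_assoc[OF ten_hom[OF diff_hom id_hom] ten_hom[OF id_hom iota0_hom] L_hom]
        L_comp_ten_id_iota0)
qed

lemma diff_comp_bang_withM_iota0_id:
  "cDiff C (cWith C X0 X1) \<cdot> cBangM C (withM C (cIota0 C X0) (cId C (cS C X1))) \<cdot> cM2 C X0 (cS C X1)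
    = cSM C (cM2 C X0 X1) \<cdot> cPhi1 C (cBang C X0) (cBang C X1) \<cdot> cId C (cBang C X0) \<otimes> cDiff C X1"
proof -
  have "cIota0 C (cBang C X0) \<otimes> cDiff C X1
      = cIota0 C (cBang C X0) \<otimes> cId C (cS C (cBang C X1)) \<cdot> cId C (cBang C X0) \<otimes> cDiff C X1"
    by (simp add: ten_comp[OF id_hom iota0_hom diff_hom id_hom, symmetric] id_left[OF diff_hom]
        id_right[OF iota0_hom])
  then show ?thesis
    by (simp add: diff_comp_bang_withM_m2[OF iota0_hom id_hom] bang_id id_right[OF diff_hom]
        diff_iota0 comp_assoc[OF ten_hom[OF id_hom diff_hom] ten_hom[OF iota0_hom id_hom] L_hom]
        L_comp_ten_iota0_id)
qed

end

theorem mainTheorem6: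
  fixes C :: "('o, 'm) cdcat" and X0 X1 :: 'o
  assumes "cd_resource_cat C"
  shows "cComp C (cDiff C (cWith C X0 X1))
            (cComp C (cBangM C (withM C (cId C (cS C X0)) (cIota0 C X1))) (cM2 C (cS C X0) X1))
       = cComp C (cSM C (cM2 C X0 X1))
            (cComp C (cPhi0 C (cBang C X0) (cBang C X1)) (cTenM C (cDiff C X0) (cId C (cBang C X1))))
     \<and> cComp C (cDiff C (cWith C X0 X1))
            (cComp C (cBangM C (withM C (cIota0 C X0) (cId C (cS C X1)))) (cM2 C X0 (cS C X1)))
       = cComp C (cSM C (cM2 C X0 X1))
            (cComp C (cPhi1 C (cBang C X0) (cBang C X1)) (cTenM C (cId C (cBang C X0)) (cDiff C X1)))"
  using cd_resource_cat.diff_comp_bang_withM_id_iota0[OF assms]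
    cd_resource_cat.diff_comp_bang_withM_iota0_id[OF assms] by blast

end
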